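(* Let $\Bbbk$ be algebraically closed, $S:\mathbb G_m\to GL(V)$ a linear action on a finite-dimensional $\Bbbk$-vector space $V$, and $X\subseteq\mathbb PV$ a closed $S$-invariant subscheme. Let $b\in V^*$, regarded as an element of $\Gamma(X;\mathcal O(1))$, be an $S$-weight vector of weight $k\in\mathbb Z$, and let $f\in X^S$, with $\Phi_S(f)\in\mathbb Z$ the weight of $S$ on $\mathcal O(1)|_f$. Then: (i) if $k>\Phi_S(f)$, then $b$ vanishes at $f$; (ii) if $k<\Phi_S(f)$, then $b$ vanishes on all of $\overline{X_f}$; (iii) if $k=\Phi_S(f)$, then the restriction of $b$ to $\overline{X_f}$ is unique up to scale (any two $S$-weight vectors of weight $\Phi_S(f)$ have proportional restrictions to $\overline{X_f}$); (iv) if $b$ does not vanish at $f$ (so $k=\Phi_S(f)$), then $b$ does not vanish at any point of $X_f$.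
   Context: $X_f=\{x\in X:\lim_{z\to0}S(z)\cdot x=f\}$ is the Białynicki-Birula stratum of $f$, and $\overline{X_f}$ its Zariski closure. *)

theory Defs
  imports "HOL-Computational_Algebra.Polynomial"
begin

text \<open>Concrete model: V = 'k^'n (vectors 'n => 'k with 'n finite), P(V) represented by
  its affine cone of nonzero vectors.  Only closed points are used.\<close>

definition smult_vec :: "'k::field \<Rightarrow> ('n \<Rightarrow> 'k) \<Rightarrow> ('n \<Rightarrow> 'k)" where
  "smult_vec c v = (\<lambda>i. c * v i)"

inductive poly_fun :: "(('n \<Rightarrow> 'k::field) \<Rightarrow> 'k) \<Rightarrow> bool" where
  pf_const: "poly_fun (\<lambda>v. c)"
| pf_coord: "poly_fun (\<lambda>v. v i)"
| pf_add: "poly_fun p \<Longrightarrow> poly_fun q \<Longrightarrow> poly_fun (\<lambda>v. p v + q v)"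
| pf_mult: "poly_fun p \<Longrightarrow> poly_fun q \<Longrightarrow> poly_fun (\<lambda>v. p v * q v)"

definition homog_poly_fun :: "(('n \<Rightarrow> 'k::field) \<Rightarrow> 'k) \<Rightarrow> bool" where
  "homog_poly_fun p \<longleftrightarrow> poly_fun p \<and> (\<exists>d::nat. \<forall>c v. p (smult_vec c v) = c ^ d * p v)"

definition proj_closed :: "('n \<Rightarrow> 'k::field) set \<Rightarrow> bool" where
  "proj_closed X \<longleftrightarrow> (\<exists>P. (\<forall>p\<in>P. homog_poly_fun p) \<and> X = {v. v \<noteq> (\<lambda>_. 0) \<and> (\<forall>p\<in>P. p v = 0)})"

definition proj_zclosure :: "('n \<Rightarrow> 'k::field) set \<Rightarrow> ('n \<Rightarrow> 'k) set" where
  "proj_zclosure A = \<Inter>{C. proj_closed C \<and> A \<subseteq> C}"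

definition gm_rep :: "('k::field \<Rightarrow> ('n::finite \<Rightarrow> 'k) \<Rightarrow> ('n \<Rightarrow> 'k)) \<Rightarrow> bool" where
  "gm_rep S \<longleftrightarrow>
     (\<exists>M::int set. finite M \<and> (\<exists>c :: 'n \<Rightarrow> 'n \<Rightarrow> int \<Rightarrow> 'k.
        \<forall>z. z \<noteq> 0 \<longrightarrow> (\<forall>v i. S z v i = (\<Sum>j\<in>UNIV. (\<Sum>m\<in>M. c i j m * z powi m) * v j))))
   \<and> (\<forall>v. S 1 v = v)
   \<and> (\<forall>z w. z \<noteq> 0 \<longrightarrow> w \<noteq> 0 \<longrightarrow> S (z * w) = S z \<circ> S w)"

text \<open>lim_{z->0} S(z).[x] = [f] in P(V): the orbit map extends algebraically over 0, i.e.
  for some m the vector z^m S(z) x is polynomial in z with nonzero value at 0 spanning the line f.\<close>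
definition gm_limit :: "('k::field \<Rightarrow> ('n \<Rightarrow> 'k) \<Rightarrow> ('n \<Rightarrow> 'k)) \<Rightarrow> ('n \<Rightarrow> 'k) \<Rightarrow> ('n \<Rightarrow> 'k) \<Rightarrow> bool" where
  "gm_limit S x f \<longleftrightarrow> (\<exists>m::int. \<exists>g :: 'n \<Rightarrow> 'k poly.
      (\<forall>z. z \<noteq> 0 \<longrightarrow> (\<forall>i. poly (g i) z = z powi m * S z x i))
    \<and> (\<lambda>i. poly (g i) 0) \<noteq> (\<lambda>_. 0)
    \<and> (\<exists>c. c \<noteq> 0 \<and> (\<lambda>i. poly (g i) 0) = smult_vec c f))"

definition bb_stratum :: "('k::field \<Rightarrow> ('n \<Rightarrow> 'k) \<Rightarrow> ('n \<Rightarrow> 'k)) \<Rightarrow> ('n \<Rightarrow> 'k) set \<Rightarrow> ('n \<Rightarrow> 'k) \<Rightarrow> ('n \<Rightarrow> 'k) set" where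
  "bb_stratum S X f = {x \<in> X. gm_limit S x f}"

definition fixed_pt :: "('k::field \<Rightarrow> ('n \<Rightarrow> 'k) \<Rightarrow> ('n \<Rightarrow> 'k)) \<Rightarrow> ('n \<Rightarrow> 'k) \<Rightarrow> bool" where
  "fixed_pt S f \<longleftrightarrow> f \<noteq> (\<lambda>_. 0) \<and> (\<forall>z. z \<noteq> 0 \<longrightarrow> (\<exists>c. S z f = smult_vec c f))"

text \<open>Phi_S(f): the weight of S on the line f (equivalently on O(1)|_f, with the convention
  matching that of weights of linear forms below).\<close>
definition Phi :: "('k::field \<Rightarrow> ('n \<Rightarrow> 'k) \<Rightarrow> ('n \<Rightarrow> 'k)) \<Rightarrow> ('n \<Rightarrow> 'k) \<Rightarrow> int" where
  "Phi S f = (THE w. \<forall>z. z \<noteq> 0 \<longrightarrow> S z f = smult_vec (z powi w) f)"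

definition lin_form :: "('n::finite \<Rightarrow> 'k::field) \<Rightarrow> ('n \<Rightarrow> 'k) \<Rightarrow> 'k" where
  "lin_form \<beta> v = (\<Sum>i\<in>UNIV. \<beta> i * v i)"

definition weight_vec :: "('k::field \<Rightarrow> ('n::finite \<Rightarrow> 'k) \<Rightarrow> ('n \<Rightarrow> 'k)) \<Rightarrow> ('n \<Rightarrow> 'k) \<Rightarrow> int \<Rightarrow> bool" where
  "weight_vec S \<beta> k \<longleftrightarrow> (\<forall>z v. z \<noteq> 0 \<longrightarrow> lin_form \<beta> (S z v) = z powi k * lin_form \<beta> v)"

end

theory Submission
  imports Defs "HOL-Library.Infinite_Typeclass"
begin

text \<open>
  If \<open>x \<in> X\<^sub>f\<close>, then \<open>z\<^sup>m S(z) x\<close> extends to a polynomial curve \<open>g\<close> with \<open>g(0)\<close> a nonzero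
  multiple \<open>c f\<close> of \<open>f\<close>, and comparing \<open>S(w) g(z)\<close> with \<open>w\<^sup>-\<^sup>m g(w z)\<close> at \<open>z = 0\<close> shows \<open>m = -\<Phi>\<^sub>S(f)\<close>.
  For a form \<open>b\<close> of weight \<open>k\<close> the function \<open>z \<mapsto> z\<^sup>k\<^sup>-\<^sup>\<Phi> b(x) = b(g(z))\<close> is therefore a polynomial
  with value \<open>c b(f)\<close> at \<open>0\<close>: if \<open>k < \<Phi>\<close> this forces \<open>b(x) = 0\<close>, and if \<open>k = \<Phi>\<close> it gives
  \<open>b(x) = c b(f)\<close> with \<open>c \<noteq> 0\<close> independent of \<open>b\<close>. Vanishing of a linear form is a closed
  condition, so these statements pass to the Zariski closure. Part (i) only compares the two weights
  at the fixed point.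
\<close>

lemma infinite_UNIV_alg_closed_field: "infinite (UNIV :: 'k::alg_closed_field set)"
proof
  assume fin: "finite (UNIV :: 'k set)"
  define q :: "'k poly" where "q = (\<Prod>a\<in>UNIV. [:-a, 1:])"
  have "degree q = card (UNIV :: 'k set)"
    unfolding q_def by (subst degree_prod_eq_sum_degree) auto
  moreover have "card (UNIV :: 'k set) > 0" using fin by (simp add: card_gt_0_iff)
  ultimately have "degree (q + 1) > 0" by (simp add: degree_add_eq_left)
  then obtain x where "poly (q + 1) x = 0" using alg_closed_imp_poly_has_root by blast
  moreover have "poly q x = 0" unfolding q_def poly_prod using fin by (intro prod_zero) auto
  ultimately show False by simp
qed

instance alg_closed_field \<subseteq> infinite
  by standard (rule infinite_UNIV_alg_closed_field)

lemma poly_eq_if_eq_off_0: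
  fixes p q :: "'k::{idom,infinite} poly"
  assumes "\<And>z. z \<noteq> 0 \<Longrightarrow> poly p z = poly q z"
  shows "p = q"
proof (rule ccontr)
  assume "p \<noteq> q"
  then have "finite {z. poly (p - q) z = 0}" by (intro poly_roots_finite) simp
  moreover have "- {0} \<subseteq> {z. poly (p - q) z = 0}" using assms by auto
  ultimately have "finite (- {0 :: 'k})" by (rule rev_finite_subset)
  then show False using infinite_UNIV[where 'a = 'k] by simp
qed

lemma laurent_coeff_eq_0:
  fixes b :: "int \<Rightarrow> 'k::{field,infinite}"
  assumes fin: "finite M" and zero: "\<And>z. z \<noteq> 0 \<Longrightarrow> (\<Sum>m\<in>M. b m * z powi m) = 0"
    and m0: "m0 \<in> M"
  shows "b m0 = 0"
proof -
  define N :: int where "N = (\<Sum>m\<in>M. \<bar>m\<bar>)"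
  have shift_nonneg: "m + N \<ge> 0" if "m \<in> M" for m
  proof -
    have "\<bar>m\<bar> \<le> N" unfolding N_def using fin that by (intro member_le_sum) auto
    then show ?thesis by linarith
  qed
  define P where "P = (\<Sum>m\<in>M. monom (b m) (nat (m + N)))"
  have "poly P z = poly 0 z" if z: "z \<noteq> 0" for z
  proof -
    have "poly P z = (\<Sum>m\<in>M. b m * z ^ nat (m + N))"
      unfolding P_def by (simp add: poly_sum poly_monom)
    also have "\<dots> = (\<Sum>m\<in>M. b m * z powi m) * z powi N"
      unfolding sum_distrib_right
    proof (rule sum.cong[OF refl])
      fix m assume "m \<in> M"
      then have "z ^ nat (m + N) = z powi (m + N)"
        using shift_nonneg by (metis nat_0_le power_int_of_nat)
      then show "b m * z ^ nat (m + N) = b m * z powi m * z powi N"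
        using z by (simp add: power_int_add mult.assoc)
    qed
    finally show ?thesis using zero[OF z] by simp
  qed
  then have "P = 0" by (rule poly_eq_if_eq_off_0)
  then have "0 = coeff P (nat (m0 + N))" by simp
  also have "\<dots> = (\<Sum>m\<in>M. if m = m0 then b m else 0)"
    unfolding P_def coeff_sum coeff_monom
  proof (rule sum.cong[OF refl])
    fix m assume "m \<in> M"
    then show "(if nat (m + N) = nat (m0 + N) then b m else 0) = (if m = m0 then b m else 0)"
      using shift_nonneg[of m] shift_nonneg[OF m0] by auto
  qed
  also have "\<dots> = b m0" using fin m0 by simp
  finally show ?thesis by simp
qed

lemma power_int_exponent_unique:
  fixes a b :: int
  assumes "\<And>z::'k::{field,infinite}. z \<noteq> 0 \<Longrightarrow> z powi a = z powi b"
  shows "a = b"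
proof (rule ccontr)
  assume ne: "a \<noteq> b"
  define c :: "int \<Rightarrow> 'k" where "c m = (if m = a then 1 else -1)" for m
  have "c a = 0"
  proof (rule laurent_coeff_eq_0[of "{a, b}"])
    fix z :: 'k assume "z \<noteq> 0"
    then show "(\<Sum>m\<in>{a, b}. c m * z powi m) = 0" using ne assms[of z] by (simp add: c_def)
  qed simp_all
  then show False by (simp add: c_def)
qed

lemma poly_eq_power_int_times_const:
  fixes p :: "'k::{field,infinite} poly"
  assumes p: "\<And>z. z \<noteq> 0 \<Longrightarrow> poly p z = z powi e * a"
  shows "e < 0 \<Longrightarrow> a = 0" and "e = 0 \<Longrightarrow> poly p 0 = a"
proof -
  assume e: "e < 0"
  define d where "d = nat (- e)"
  have "poly (p * monom 1 d) z = poly [:a:] z" if z: "z \<noteq> 0" for z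
  proof -
    have "z ^ d = z powi (- e)" using e by (simp add: d_def power_int_def)
    then show ?thesis using z p[OF z] by (simp add: poly_monom power_int_minus field_simps)
  qed
  then have "p * monom 1 d = [:a:]" by (rule poly_eq_if_eq_off_0)
  then have "poly (p * monom 1 d) 0 = a" by simp
  moreover have "d > 0" using e by (simp add: d_def)
  ultimately show "a = 0" by (simp add: poly_monom zero_power)
next
  assume "e = 0"
  then have "p = [:a:]" using p by (intro poly_eq_if_eq_off_0) simp
  then show "poly p 0 = a" by simp
qed

text \<open>Comparing coefficients of \<open>z\<close> in \<open>ch (z w) = ch w ch z\<close> gives \<open>b m w\<^sup>m = ch w b m\<close>, and
  \<open>ch 1 = 1\<close> provides some \<open>b m \<noteq> 0\<close>.\<close>

lemma multiplicative_laurent_eq_power_int: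
  fixes ch :: "'k::{field,infinite} \<Rightarrow> 'k" and b :: "int \<Rightarrow> 'k"
  assumes fin: "finite M"
    and laurent: "\<And>z. z \<noteq> 0 \<Longrightarrow> ch z = (\<Sum>m\<in>M. b m * z powi m)"
    and one: "ch 1 = 1"
    and mult: "\<And>z w. z \<noteq> 0 \<Longrightarrow> w \<noteq> 0 \<Longrightarrow> ch (z * w) = ch z * ch w"
  obtains m0 where "\<And>w. w \<noteq> 0 \<Longrightarrow> ch w = w powi m0"
proof -
  have coeff_eq: "b m * w powi m = ch w * b m" if w: "w \<noteq> 0" and m: "m \<in> M" for w m
  proof -
    have "b m * w powi m - ch w * b m = 0"
    proof (rule laurent_coeff_eq_0[OF fin _ m])
      fix z :: 'k assume z: "z \<noteq> 0"
      have "(\<Sum>m\<in>M. (b m * w powi m - ch w * b m) * z powi m)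
          = (\<Sum>m\<in>M. b m * (z * w) powi m) - ch w * (\<Sum>m\<in>M. b m * z powi m)"
        unfolding sum_distrib_left sum_subtractf[symmetric]
        by (rule sum.cong) (simp_all add: power_int_mult_distrib algebra_simps)
      also have "\<dots> = ch (z * w) - ch w * ch z" using z w by (simp add: laurent)
      also have "\<dots> = 0" using mult[OF z w] by simp
      finally show "(\<Sum>m\<in>M. (b m * w powi m - ch w * b m) * z powi m) = 0" .
    qed
    then show ?thesis by simp
  qed
  have "(\<Sum>m\<in>M. b m) = 1" using laurent[of 1] one by simp
  then obtain m0 where m0: "m0 \<in> M" "b m0 \<noteq> 0" by (metis one_neq_zero sum.neutral)
  show ?thesis
  proof (rule that)
    fix w :: 'k assume "w \<noteq> 0"
    then show "ch w = w powi m0" using coeff_eq[OF _ m0(1)] m0(2) by (simp add: mult.commute)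
  qed
qed

lemma smult_vec_apply [simp]: "smult_vec a v i = a * v i"
  by (simp add: smult_vec_def)

lemma lin_form_smult_vec: "lin_form \<gamma> (smult_vec a v) = a * lin_form \<gamma> v"
  by (simp add: lin_form_def sum_distrib_left mult_ac)

lemma lin_form_diff:
  "lin_form (\<lambda>i. a * \<beta> i - b * \<beta>' i) v = a * lin_form \<beta> v - b * lin_form \<beta>' v"
  by (simp add: lin_form_def sum_subtractf sum_distrib_left algebra_simps)

lemma weight_vec_diff:
  assumes "weight_vec S \<beta> k" "weight_vec S \<beta>' k"
  shows "weight_vec S (\<lambda>i. a * \<beta> i - b * \<beta>' i) k"
  using assms unfolding weight_vec_def lin_form_diff by (simp add: algebra_simps)

lemma gm_rep_laurent:
  assumes "gm_rep S"
  obtains M :: "int set" and c :: "'n::finite \<Rightarrow> 'n \<Rightarrow> int \<Rightarrow> 'k::field"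
  where "finite M"
    "\<And>z v i. z \<noteq> 0 \<Longrightarrow> S z v i = (\<Sum>j\<in>UNIV. (\<Sum>m\<in>M. c i j m * z powi m) * v j)"
proof -
  from assms obtain M :: "int set" and c :: "'n \<Rightarrow> 'n \<Rightarrow> int \<Rightarrow> 'k" where "finite M"
    "\<forall>z. z \<noteq> 0 \<longrightarrow> (\<forall>v i. S z v i = (\<Sum>j\<in>UNIV. (\<Sum>m\<in>M. c i j m * z powi m) * v j))"
    unfolding gm_rep_def by blast
  then show ?thesis using that by simp
qed

lemma gm_rep_one: "gm_rep S \<Longrightarrow> S 1 v = v"
  unfolding gm_rep_def by simp

lemma gm_rep_mult: "gm_rep S \<Longrightarrow> z \<noteq> 0 \<Longrightarrow> w \<noteq> 0 \<Longrightarrow> S (z * w) v = S z (S w v)"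
  unfolding gm_rep_def by simp

lemma gm_rep_smult_vec:
  assumes "gm_rep S" "z \<noteq> 0"
  shows "S z (smult_vec a v) = smult_vec a (S z v)"
proof -
  obtain M c where "finite M"
    and S: "\<And>z v i. z \<noteq> 0 \<Longrightarrow> S z v i = (\<Sum>j\<in>UNIV. (\<Sum>m\<in>M. c i j m * z powi m) * v j)"
    using gm_rep_laurent[OF assms(1)] by blast
  show ?thesis by (rule ext) (simp add: S[OF assms(2)] sum_distrib_left mult_ac)
qed

lemma fixed_pt_nonzero_coord:
  assumes "fixed_pt S f"
  obtains i where "f i \<noteq> 0"
proof -
  have "f \<noteq> (\<lambda>_. 0)" using assms unfolding fixed_pt_def by (rule conjunct1)
  then show ?thesis using that by fastforce
qed

lemma fixed_pt_has_weight:
  fixes S :: "'k::{field,infinite} \<Rightarrow> ('n::finite \<Rightarrow> 'k) \<Rightarrow> ('n \<Rightarrow> 'k)"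
  assumes rep: "gm_rep S" and ffix: "fixed_pt S f"
  obtains m0 where "\<And>z. z \<noteq> 0 \<Longrightarrow> S z f = smult_vec (z powi m0) f"
proof -
  obtain M c where fin: "finite M"
    and S: "\<And>z v i. z \<noteq> 0 \<Longrightarrow> S z v i = (\<Sum>j\<in>UNIV. (\<Sum>m\<in>M. c i j m * z powi m) * v j)"
    using gm_rep_laurent[OF rep] by blast
  obtain i0 where fi0: "f i0 \<noteq> 0" using fixed_pt_nonzero_coord[OF ffix] by blast
  define ch where "ch z = S z f i0 / f i0" for z
  have eigen: "S z f = smult_vec (ch z) f" if "z \<noteq> 0" for z
  proof -
    have "\<exists>a. S z f = smult_vec a f" using ffix that by (simp add: fixed_pt_def)
    then obtain a where a: "S z f = smult_vec a f" by blast
    then have "ch z = a" using fi0 by (simp add: ch_def)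
    then show ?thesis using a by simp
  qed
  define b where "b m = (\<Sum>j\<in>UNIV. c i0 j m * f j) / f i0" for m
  have "ch z = (\<Sum>m\<in>M. b m * z powi m)" if "z \<noteq> 0" for z
  proof -
    have "(\<Sum>j\<in>UNIV. (\<Sum>m\<in>M. c i0 j m * z powi m) * f j)
        = (\<Sum>m\<in>M. (\<Sum>j\<in>UNIV. c i0 j m * f j) * z powi m)"
      unfolding sum_distrib_right by (subst sum.swap) (simp add: mult_ac)
    also have "\<dots> = (\<Sum>m\<in>M. b m * z powi m * f i0)"
      using fi0 by (intro sum.cong) (simp_all add: b_def)
    also have "\<dots> = (\<Sum>m\<in>M. b m * z powi m) * f i0"
      by (simp add: sum_distrib_right)
    finally show ?thesis using fi0 by (simp add: ch_def S[OF that])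
  qed
  moreover have "ch 1 = 1" using fi0 by (simp add: ch_def gm_rep_one[OF rep])
  moreover have "ch (z * w) = ch z * ch w" if z: "z \<noteq> 0" and w: "w \<noteq> 0" for z w
  proof -
    have "smult_vec (ch (z * w)) f = S z (S w f)"
      using eigen[of "z * w"] z w by (simp add: gm_rep_mult[OF rep z w])
    also have "\<dots> = smult_vec (ch w) (smult_vec (ch z) f)"
      by (simp only: eigen[OF w] gm_rep_smult_vec[OF rep z] eigen[OF z])
    finally have "smult_vec (ch (z * w)) f i0 = smult_vec (ch w) (smult_vec (ch z) f) i0"
      by simp
    then show ?thesis using fi0 by (simp add: mult_ac)
  qed
  ultimately obtain m0 where "\<And>w. w \<noteq> 0 \<Longrightarrow> ch w = w powi m0"
    using multiplicative_laurent_eq_power_int[OF fin] by blast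
  then show ?thesis using eigen that by simp
qed

lemma Phi_eqI:
  fixes S :: "'k::{field,infinite} \<Rightarrow> ('n::finite \<Rightarrow> 'k) \<Rightarrow> ('n \<Rightarrow> 'k)"
  assumes ffix: "fixed_pt S f" and w: "\<And>z. z \<noteq> 0 \<Longrightarrow> S z f = smult_vec (z powi w) f"
  shows "Phi S f = w"
  unfolding Phi_def
proof (rule the_equality)
  show "\<forall>z. z \<noteq> 0 \<longrightarrow> S z f = smult_vec (z powi w) f" using w by blast
next
  fix w' assume w': "\<forall>z. z \<noteq> 0 \<longrightarrow> S z f = smult_vec (z powi w') f"
  obtain i0 where fi0: "f i0 \<noteq> 0" using fixed_pt_nonzero_coord[OF ffix] by blast
  show "w' = w"
  proof (rule power_int_exponent_unique)
    fix z :: 'k assume "z \<noteq> 0"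
    then have "z powi w' * f i0 = z powi w * f i0" using w w' by (metis smult_vec_apply)
    then show "z powi w' = z powi w" using fi0 by simp
  qed
qed

lemma fixed_pt_Phi:
  fixes S :: "'k::{field,infinite} \<Rightarrow> ('n::finite \<Rightarrow> 'k) \<Rightarrow> ('n \<Rightarrow> 'k)"
  assumes "gm_rep S" "fixed_pt S f" "z \<noteq> 0"
  shows "S z f = smult_vec (z powi Phi S f) f"
proof -
  obtain m0 where m0: "\<And>z. z \<noteq> 0 \<Longrightarrow> S z f = smult_vec (z powi m0) f"
    using fixed_pt_has_weight[OF assms(1,2)] by blast
  then have "Phi S f = m0" using Phi_eqI[OF assms(2)] by blast
  then show ?thesis using m0 assms(3) by simp
qed

lemma weight_eq_Phi_if_lin_form_nonzero:
  fixes S :: "'k::{field,infinite} \<Rightarrow> ('n::finite \<Rightarrow> 'k) \<Rightarrow> ('n \<Rightarrow> 'k)"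
  assumes rep: "gm_rep S" and ffix: "fixed_pt S f" and wt: "weight_vec S \<gamma> k"
    and nz: "lin_form \<gamma> f \<noteq> 0"
  shows "k = Phi S f"
proof (rule power_int_exponent_unique)
  fix z :: 'k assume z: "z \<noteq> 0"
  have "z powi k * lin_form \<gamma> f = lin_form \<gamma> (S z f)" using wt z unfolding weight_vec_def by simp
  also have "\<dots> = z powi Phi S f * lin_form \<gamma> f"
    using fixed_pt_Phi[OF rep ffix z] by (simp add: lin_form_smult_vec)
  finally show "z powi k = z powi Phi S f" using nz by simp
qed

text \<open>The polynomial identity \<open>\<Sum>\<^sub>j A\<^sub>j g\<^sub>j(z) = w\<^sup>-\<^sup>m g\<^sub>i\<^sub>0(w z)\<close>, with \<open>A\<close> the \<open>i\<^sub>0\<close>-th row of \<open>S(w)\<close>,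
  expresses \<open>S(w) (z\<^sup>m S(z) x) = w\<^sup>-\<^sup>m ((w z)\<^sup>m S(w z) x)\<close>; at \<open>z = 0\<close> it reads
  \<open>c S(w) f = w\<^sup>-\<^sup>m c f\<close>.\<close>

lemma gm_limit_exponent:
  fixes S :: "'k::{field,infinite} \<Rightarrow> ('n::finite \<Rightarrow> 'k) \<Rightarrow> ('n \<Rightarrow> 'k)"
  assumes rep: "gm_rep S" and ffix: "fixed_pt S f"
    and g: "\<And>z i. z \<noteq> 0 \<Longrightarrow> poly (g i) z = z powi m * S z x i"
    and g0: "\<And>i. poly (g i) 0 = c * f i" and c: "c \<noteq> 0"
  shows "Phi S f = - m"
proof (rule power_int_exponent_unique)
  fix w :: 'k assume w: "w \<noteq> 0"
  obtain M a where "finite M"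
    and S: "\<And>z v i. z \<noteq> 0 \<Longrightarrow> S z v i = (\<Sum>j\<in>UNIV. (\<Sum>m\<in>M. a i j m * z powi m) * v j)"
    using gm_rep_laurent[OF rep] by blast
  obtain i0 where fi0: "f i0 \<noteq> 0" using fixed_pt_nonzero_coord[OF ffix] by blast
  define A where "A j = (\<Sum>m\<in>M. a i0 j m * w powi m)" for j
  define Q where "Q = (\<Sum>j\<in>UNIV. smult (A j) (g j))"
  define R where "R = smult (w powi (- m)) (pcompose (g i0) [:0, w:])"
  have "poly Q z = poly R z" if z: "z \<noteq> 0" for z
  proof -
    have wz: "w * z \<noteq> 0" using w z by simp
    have "poly Q z = z powi m * S w (S z x) i0"
      by (simp add: Q_def poly_sum g[OF z] S[OF w] A_def sum_distrib_left mult_ac)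
    also have "\<dots> = w powi (- m) * ((w * z) powi m * S (w * z) x i0)"
      using gm_rep_mult[OF rep w z] w
      by (simp add: power_int_mult_distrib power_int_minus field_simps)
    also have "\<dots> = poly R z"
      using g[OF wz, of i0] by (simp add: R_def poly_pcompose mult.commute)
    finally show ?thesis .
  qed
  then have "Q = R" by (rule poly_eq_if_eq_off_0)
  then have "poly Q 0 = poly R 0" by simp
  then have "c * S w f i0 = w powi (- m) * (c * f i0)"
    by (simp add: Q_def R_def poly_sum poly_pcompose g0 S[OF w] A_def sum_distrib_left mult_ac)
  then have "c * f i0 * w powi Phi S f = c * f i0 * w powi (- m)"
    using fixed_pt_Phi[OF rep ffix w] by (simp add: mult_ac)
  then show "w powi Phi S f = w powi (- m)" using c fi0 by simp
qed

lemma gm_limit_lin_form_poly: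
  fixes S :: "'k::{field,infinite} \<Rightarrow> ('n::finite \<Rightarrow> 'k) \<Rightarrow> ('n \<Rightarrow> 'k)"
  assumes rep: "gm_rep S" and ffix: "fixed_pt S f" and lim: "gm_limit S x f"
  obtains c where "c \<noteq> 0"
    "\<And>\<gamma> k. weight_vec S \<gamma> k \<Longrightarrow> \<exists>p. (\<forall>z. z \<noteq> 0 \<longrightarrow> poly p z = z powi (k - Phi S f) * lin_form \<gamma> x)
        \<and> poly p 0 = c * lin_form \<gamma> f"
proof -
  obtain m g c where g_off_0: "\<forall>z. z \<noteq> 0 \<longrightarrow> (\<forall>i. poly (g i) z = z powi m * S z x i)"
    and "(\<lambda>i. poly (g i) 0) \<noteq> (\<lambda>_. 0)"
    and c: "c \<noteq> 0" and g0: "(\<lambda>i. poly (g i) 0) = smult_vec c f"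
    using lim unfolding gm_limit_def by (elim exE conjE)
  have g: "poly (g i) z = z powi m * S z x i" if "z \<noteq> 0" for z i using g_off_0 that by blast
  have g0': "poly (g i) 0 = c * f i" for i using fun_cong[OF g0, of i] by simp
  have Phi: "Phi S f = - m" using gm_limit_exponent[OF rep ffix g g0' c] .
  have "\<exists>p. (\<forall>z. z \<noteq> 0 \<longrightarrow> poly p z = z powi (k - Phi S f) * lin_form \<gamma> x)
        \<and> poly p 0 = c * lin_form \<gamma> f" if wt: "weight_vec S \<gamma> k" for \<gamma> k
  proof (intro exI conjI allI impI)
    fix z :: 'k assume z: "z \<noteq> 0"
    have "poly (\<Sum>i\<in>UNIV. smult (\<gamma> i) (g i)) z = z powi m * lin_form \<gamma> (S z x)"
      by (simp add: poly_sum g[OF z] lin_form_def sum_distrib_left mult_ac)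
    also have "\<dots> = z powi (k - Phi S f) * lin_form \<gamma> x"
      using wt z Phi unfolding weight_vec_def by (simp add: power_int_add)
    finally show "poly (\<Sum>i\<in>UNIV. smult (\<gamma> i) (g i)) z = z powi (k - Phi S f) * lin_form \<gamma> x" .
  next
    show "poly (\<Sum>i\<in>UNIV. smult (\<gamma> i) (g i)) 0 = c * lin_form \<gamma> f"
      by (simp add: poly_sum g0' lin_form_def sum_distrib_left mult_ac)
  qed
  then show ?thesis using c that by blast
qed

lemma gm_limit_lin_form_below_Phi:
  fixes S :: "'k::{field,infinite} \<Rightarrow> ('n::finite \<Rightarrow> 'k) \<Rightarrow> ('n \<Rightarrow> 'k)"
  assumes "gm_rep S" "fixed_pt S f" "gm_limit S x f" "weight_vec S \<gamma> k" "k < Phi S f"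
  shows "lin_form \<gamma> x = 0"
proof -
  obtain c where "c \<noteq> 0"
    and p: "\<And>\<gamma> k. weight_vec S \<gamma> k \<Longrightarrow> \<exists>p. (\<forall>z. z \<noteq> 0 \<longrightarrow> poly p z = z powi (k - Phi S f) * lin_form \<gamma> x)
        \<and> poly p 0 = c * lin_form \<gamma> f"
    using gm_limit_lin_form_poly[OF assms(1-3)] by blast
  then obtain p where "\<forall>z. z \<noteq> 0 \<longrightarrow> poly p z = z powi (k - Phi S f) * lin_form \<gamma> x"
    using p[OF assms(4)] by blast
  then show ?thesis using assms(5) by (intro poly_eq_power_int_times_const(1)[of p "k - Phi S f"]) auto
qed

lemma gm_limit_lin_form_at_Phi:
  fixes S :: "'k::{field,infinite} \<Rightarrow> ('n::finite \<Rightarrow> 'k) \<Rightarrow> ('n \<Rightarrow> 'k)"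
  assumes "gm_rep S" "fixed_pt S f" "gm_limit S x f"
  obtains c where "c \<noteq> 0" "\<And>\<gamma>. weight_vec S \<gamma> (Phi S f) \<Longrightarrow> lin_form \<gamma> x = c * lin_form \<gamma> f"
proof -
  obtain c where c: "c \<noteq> 0"
    and p: "\<And>\<gamma> k. weight_vec S \<gamma> k \<Longrightarrow> \<exists>p. (\<forall>z. z \<noteq> 0 \<longrightarrow> poly p z = z powi (k - Phi S f) * lin_form \<gamma> x)
        \<and> poly p 0 = c * lin_form \<gamma> f"
    using gm_limit_lin_form_poly[OF assms] by blast
  have "lin_form \<gamma> x = c * lin_form \<gamma> f" if wt: "weight_vec S \<gamma> (Phi S f)" for \<gamma>
  proof -
    obtain p where p_off_0: "\<forall>z. z \<noteq> 0 \<longrightarrow> poly p z = z powi (Phi S f - Phi S f) * lin_form \<gamma> x"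
      and p0: "poly p 0 = c * lin_form \<gamma> f"
      using p[OF wt] by blast
    have "poly p 0 = lin_form \<gamma> x"
      using p_off_0 by (intro poly_eq_power_int_times_const(2)[of p "Phi S f - Phi S f"]) auto
    with p0 show ?thesis by simp
  qed
  then show ?thesis using c that by blast
qed

lemma poly_fun_lin_comb: "finite A \<Longrightarrow> poly_fun (\<lambda>v. \<Sum>i\<in>A. \<gamma> i * v i)"
proof (induction A rule: finite_induct)
  case empty
  then show ?case using pf_const[of 0] by simp
next
  case (insert a A)
  have "poly_fun (\<lambda>v. \<gamma> a * v a + (\<Sum>i\<in>A. \<gamma> i * v i))"
    using insert by (intro pf_add pf_mult pf_const pf_coord)
  then show ?case using insert by simp
qed

lemma proj_closed_lin_form_zeros:
  "proj_closed {v :: 'n::finite \<Rightarrow> 'k::field. v \<noteq> (\<lambda>_. 0) \<and> lin_form \<gamma> v = 0}"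
  unfolding proj_closed_def
proof (intro exI[of _ "{lin_form \<gamma>}"] conjI)
  have "poly_fun (lin_form \<gamma>)" unfolding lin_form_def by (rule poly_fun_lin_comb) simp
  moreover have "\<forall>c v. lin_form \<gamma> (smult_vec c v) = c ^ 1 * lin_form \<gamma> v"
    by (simp add: lin_form_smult_vec)
  ultimately show "\<forall>p\<in>{lin_form \<gamma>}. homog_poly_fun p" unfolding homog_poly_fun_def by blast
qed auto

lemma lin_form_zero_on_proj_zclosure:
  assumes "\<And>x. x \<in> A \<Longrightarrow> x \<noteq> (\<lambda>_. 0) \<and> lin_form \<gamma> x = 0" and "x \<in> proj_zclosure A"
  shows "lin_form \<gamma> x = (0 :: 'k::field)"
  using assms proj_closed_lin_form_zeros[of \<gamma>] unfolding proj_zclosure_def by blast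

lemma bb_stratum_nonzero: "proj_closed X \<Longrightarrow> x \<in> bb_stratum S X f \<Longrightarrow> x \<noteq> (\<lambda>_. 0)"
  unfolding proj_closed_def bb_stratum_def by blast

lemma lin_form_zero_on_stratum_closure_below_Phi:
  fixes S :: "'k::{field,infinite} \<Rightarrow> ('n::finite \<Rightarrow> 'k) \<Rightarrow> ('n \<Rightarrow> 'k)"
  assumes "gm_rep S" "proj_closed X" "fixed_pt S f" "weight_vec S \<gamma> k" "k < Phi S f"
    and "x \<in> proj_zclosure (bb_stratum S X f)"
  shows "lin_form \<gamma> x = 0"
proof (rule lin_form_zero_on_proj_zclosure[OF _ assms(6)])
  fix y assume y: "y \<in> bb_stratum S X f"
  then have "gm_limit S y f" by (simp add: bb_stratum_def)
  then show "y \<noteq> (\<lambda>_. 0) \<and> lin_form \<gamma> y = 0"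
    using bb_stratum_nonzero[OF assms(2) y] gm_limit_lin_form_below_Phi[OF assms(1,3) _ assms(4,5)] by blast
qed

lemma weight_Phi_lin_forms_proportional_on_stratum_closure:
  fixes S :: "'k::{field,infinite} \<Rightarrow> ('n::finite \<Rightarrow> 'k) \<Rightarrow> ('n \<Rightarrow> 'k)"
  assumes rep: "gm_rep S" and closed: "proj_closed X" and ffix: "fixed_pt S f"
    and wt: "weight_vec S \<beta> (Phi S f)" and wt': "weight_vec S \<beta>' (Phi S f)"
  obtains c1 c2 where "(c1, c2) \<noteq> (0, 0)"
    "\<And>x. x \<in> proj_zclosure (bb_stratum S X f) \<Longrightarrow> c1 * lin_form \<beta> x = c2 * lin_form \<beta>' x"
proof -
  define degenerate where "degenerate \<longleftrightarrow> lin_form \<beta>' f = 0 \<and> lin_form \<beta> f = 0"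
  define c1 where "c1 = (if degenerate then 1 else lin_form \<beta>' f)"
  define c2 where "c2 = (if degenerate then 0 else lin_form \<beta> f)"
  define \<gamma> where "\<gamma> = (\<lambda>i. c1 * \<beta> i - c2 * \<beta>' i)"
  have wt_\<gamma>: "weight_vec S \<gamma> (Phi S f)" unfolding \<gamma>_def using wt wt' by (rule weight_vec_diff)
  have "lin_form \<gamma> f = 0" unfolding \<gamma>_def lin_form_diff by (simp add: c1_def c2_def degenerate_def)
  have "lin_form \<gamma> y = 0" if "y \<in> bb_stratum S X f" for y
  proof -
    have "gm_limit S y f" using that by (simp add: bb_stratum_def)
    then obtain c where "c \<noteq> 0"
      and "\<And>\<gamma>. weight_vec S \<gamma> (Phi S f) \<Longrightarrow> lin_form \<gamma> y = c * lin_form \<gamma> f"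
      using gm_limit_lin_form_at_Phi[OF rep ffix] by blast
    then show ?thesis using wt_\<gamma> \<open>lin_form \<gamma> f = 0\<close> by simp
  qed
  then have \<gamma>_zero: "lin_form \<gamma> x = 0" if "x \<in> proj_zclosure (bb_stratum S X f)" for x
    using bb_stratum_nonzero[OF closed] by (intro lin_form_zero_on_proj_zclosure[OF _ that]) blast
  show ?thesis
  proof (rule that)
    show "(c1, c2) \<noteq> (0, 0)" by (auto simp: c1_def c2_def degenerate_def)
  next
    fix x assume "x \<in> proj_zclosure (bb_stratum S X f)"
    then show "c1 * lin_form \<beta> x = c2 * lin_form \<beta>' x"
      using \<gamma>_zero unfolding \<gamma>_def lin_form_diff by simp
  qed
qed

lemma lin_form_nonzero_on_stratum:
  fixes S :: "'k::{field,infinite} \<Rightarrow> ('n::finite \<Rightarrow> 'k) \<Rightarrow> ('n \<Rightarrow> 'k)"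
  assumes rep: "gm_rep S" and ffix: "fixed_pt S f" and wt: "weight_vec S \<beta> k"
    and nz: "lin_form \<beta> f \<noteq> 0" and x: "x \<in> bb_stratum S X f"
  shows "lin_form \<beta> x \<noteq> 0"
proof -
  have wt_Phi: "weight_vec S \<beta> (Phi S f)"
    using wt weight_eq_Phi_if_lin_form_nonzero[OF rep ffix wt nz] by simp
  have "gm_limit S x f" using x by (simp add: bb_stratum_def)
  then obtain c where "c \<noteq> 0"
    and "\<And>\<gamma>. weight_vec S \<gamma> (Phi S f) \<Longrightarrow> lin_form \<gamma> x = c * lin_form \<gamma> f"
    using gm_limit_lin_form_at_Phi[OF rep ffix] by blast
  then show ?thesis using wt_Phi nz by simp
qed

theorem lemma2p1:
  fixes S :: "'k::alg_closed_field \<Rightarrow> ('n::finite \<Rightarrow> 'k) \<Rightarrow> ('n \<Rightarrow> 'k)"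
    and X :: "('n \<Rightarrow> 'k) set"
    and \<beta> :: "'n \<Rightarrow> 'k" and k :: int and f :: "'n \<Rightarrow> 'k"
  assumes rep: "gm_rep S"
    and closed: "proj_closed X"
    and inv: "\<And>z x. z \<noteq> 0 \<Longrightarrow> x \<in> X \<Longrightarrow> S z x \<in> X"
    and wt: "weight_vec S \<beta> k"
    and fX: "f \<in> X" and ffix: "fixed_pt S f"
  shows "(k > Phi S f \<longrightarrow> lin_form \<beta> f = 0)
       \<and> (k < Phi S f \<longrightarrow> (\<forall>x \<in> proj_zclosure (bb_stratum S X f). lin_form \<beta> x = 0))
       \<and> (k = Phi S f \<longrightarrow> (\<forall>\<beta>'. weight_vec S \<beta>' (Phi S f) \<longrightarrow>
             (\<exists>c1 c2. (c1, c2) \<noteq> (0, 0) \<and>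
                (\<forall>x \<in> proj_zclosure (bb_stratum S X f). c1 * lin_form \<beta> x = c2 * lin_form \<beta>' x))))
       \<and> (lin_form \<beta> f \<noteq> 0 \<longrightarrow> (\<forall>x \<in> bb_stratum S X f. lin_form \<beta> x \<noteq> 0))"
proof (intro conjI impI allI ballI)
  assume "k > Phi S f"
  show "lin_form \<beta> f = 0"
  proof (rule ccontr)
    assume "lin_form \<beta> f \<noteq> 0"
    then have "k = Phi S f" by (rule weight_eq_Phi_if_lin_form_nonzero[OF rep ffix wt])
    with \<open>k > Phi S f\<close> show False by simp
  qed
next
  show "lin_form \<beta> x = 0" if "k < Phi S f" "x \<in> proj_zclosure (bb_stratum S X f)" for x
    using lin_form_zero_on_stratum_closure_below_Phi[OF rep closed ffix wt] that .
next
  fix \<beta>' assume "k = Phi S f" and wt': "weight_vec S \<beta>' (Phi S f)"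
  then obtain c1 c2 where "(c1, c2) \<noteq> (0, 0)"
    and "\<And>x. x \<in> proj_zclosure (bb_stratum S X f) \<Longrightarrow> c1 * lin_form \<beta> x = c2 * lin_form \<beta>' x"
    using weight_Phi_lin_forms_proportional_on_stratum_closure[OF rep closed ffix _ wt'] wt by blast
  then show "\<exists>c1 c2. (c1, c2) \<noteq> (0, 0) \<and>
      (\<forall>x \<in> proj_zclosure (bb_stratum S X f). c1 * lin_form \<beta> x = c2 * lin_form \<beta>' x)"
    by blast
next
  show "lin_form \<beta> x \<noteq> 0" if "lin_form \<beta> f \<noteq> 0" "x \<in> bb_stratum S X f" for x
    using lin_form_nonzero_on_stratum[OF rep ffix wt that] .
qed

end
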